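(* For $d\in[0,D]$ with $Ld<f_BT$, let $X(d)$ be the optimal value of \[ \min_{P,\{\beta_n\}}\ P+\sum_{n=1}^N\beta_n^2(Ph_n+\sigma^2W) \] subject to \[ \frac{P\left(\sum_{n=1}^N\sqrt{h_ng_n}\,\beta_n\right)^2}{\sigma^2W\left(1+\sum_{n=1}^N g_n\beta_n^2\right)}\ge e^{\frac{2d}{W(T-Ld/f_B)}}-1,\qquad P\ge0,\quad \beta_n\ge0\ \ \forall n. \] Then $X(d)$ is a monotonically increasing function of $d$.
   Context: All parameters $N, h_n, g_n, W, \sigma^2, L, D, T, f_B$ are given positive constants, and $n$ ranges over $\{1,\dots,N\}$. *)

theory Defs
  imports Complex_Main
begin

definition feasible ::
  "nat \<Rightarrow> (nat \<Rightarrow> real) \<Rightarrow> (nat \<Rightarrow> real) \<Rightarrow> real \<Rightarrow> real \<Rightarrow> real \<Rightarrow> real \<Rightarrow> real \<Rightarrow> real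
   \<Rightarrow> real \<Rightarrow> (nat \<Rightarrow> real) \<Rightarrow> bool" where
  "feasible N h g W \<sigma> L T fB d P \<beta> \<longleftrightarrow>
     P \<ge> 0 \<and> (\<forall>n\<in>{1..N}. \<beta> n \<ge> 0) \<and>
     P * (\<Sum>n=1..N. sqrt (h n * g n) * \<beta> n)^2
       / (\<sigma>^2 * W * (1 + (\<Sum>n=1..N. g n * \<beta> n ^ 2)))
     \<ge> exp (2 * d / (W * (T - L * d / fB))) - 1"

definition objective :: "nat \<Rightarrow> (nat \<Rightarrow> real) \<Rightarrow> real \<Rightarrow> real \<Rightarrow> real \<Rightarrow> (nat \<Rightarrow> real) \<Rightarrow> real" where
  "objective N h W \<sigma> P \<beta> = P + (\<Sum>n=1..N. \<beta> n ^ 2 * (P * h n + \<sigma>^2 * W))"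

definition Xopt ::
  "nat \<Rightarrow> (nat \<Rightarrow> real) \<Rightarrow> (nat \<Rightarrow> real) \<Rightarrow> real \<Rightarrow> real \<Rightarrow> real \<Rightarrow> real \<Rightarrow> real \<Rightarrow> real \<Rightarrow> real" where
  "Xopt N h g W \<sigma> L T fB d =
     Inf {objective N h W \<sigma> P \<beta> | P \<beta>. feasible N h g W \<sigma> L T fB d P \<beta>}"

end

theory Submission
  imports Defs
begin

text \<open>The constraint threshold \<open>exp (2 d / (W (T - L d / f\<^sub>B))) - 1\<close> grows with \<open>d\<close>, so the
  feasible sets shrink as \<open>d\<close> grows, and an infimum over a smaller set is larger. For this the
  sets must be bounded below (the objective is nonnegative) and nonempty: with all
  \<open>\<beta>\<^sub>n = 1\<close> the constraint is linear in \<open>P\<close>, so a large enough power is feasible.\<close>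

lemma rate_exponent_mono:
  fixes W L T fB d1 d2 :: real
  assumes "W > 0" "L \<ge> 0" "fB > 0" "0 \<le> d2" "d1 \<le> d2" "L * d2 < fB * T"
  shows "2 * d1 / (W * (T - L * d1 / fB)) \<le> 2 * d2 / (W * (T - L * d2 / fB))"
proof (rule frac_le)
  show "0 < W * (T - L * d2 / fB)"
    using assms by (simp add: field_simps)
  show "W * (T - L * d2 / fB) \<le> W * (T - L * d1 / fB)"
    using assms by (auto simp: field_simps intro!: mult_left_mono)
qed (use assms in auto)

lemma feasible_antimono:
  assumes "exp (2 * d1 / (W * (T - L * d1 / fB))) \<le> exp (2 * d2 / (W * (T - L * d2 / fB)))"
    and "feasible N h g W \<sigma> L T fB d2 P \<beta>"
  shows "feasible N h g W \<sigma> L T fB d1 P \<beta>"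
  using assms unfolding feasible_def by linarith

lemma objective_nonneg:
  assumes "\<forall>n\<in>{1..N}. h n \<ge> 0" "W \<ge> 0" "P \<ge> 0"
  shows "objective N h W \<sigma> P \<beta> \<ge> 0"
  unfolding objective_def using assms by (intro add_nonneg_nonneg sum_nonneg) auto

lemma objective_bdd_below:
  assumes "\<forall>n\<in>{1..N}. h n \<ge> 0" "W \<ge> 0"
  shows "bdd_below {objective N h W \<sigma> P \<beta> | P \<beta>. feasible N h g W \<sigma> L T fB d P \<beta>}"
proof (rule bdd_belowI)
  fix x assume "x \<in> {objective N h W \<sigma> P \<beta> | P \<beta>. feasible N h g W \<sigma> L T fB d P \<beta>}"
  then obtain P \<beta> where "x = objective N h W \<sigma> P \<beta>" "P \<ge> 0"
    unfolding feasible_def by blast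
  with assms show "0 \<le> x"
    by (simp add: objective_nonneg)
qed

lemma feasible_unit_beams_exists:
  assumes "N > 0" "\<forall>n\<in>{1..N}. h n > 0" "\<forall>n\<in>{1..N}. g n > 0" "W > 0" "\<sigma> > 0"
  shows "\<exists>P. feasible N h g W \<sigma> L T fB d P (\<lambda>_. 1)"
proof -
  define c where "c = exp (2 * d / (W * (T - L * d / fB))) - 1"
  define S where "S = (\<Sum>n=1..N. sqrt (h n * g n))"
  define G where "G = (\<Sum>n=1..N. g n)"
  have "S > 0"
    unfolding S_def using assms by (intro sum_pos) auto
  have "G \<ge> 0"
    unfolding G_def using assms by (intro sum_nonneg) (auto intro: less_imp_le)
  define M where "M = \<sigma>^2 * W * (1 + G)"
  have "M > 0"
    unfolding M_def using \<open>G \<ge> 0\<close> assms by simp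
  define P where "P = \<bar>c\<bar> * M / S^2"
  have "P \<ge> 0"
    unfolding P_def using \<open>M > 0\<close> by simp
  have "P * S^2 / M = \<bar>c\<bar>"
    unfolding P_def using \<open>M > 0\<close> \<open>S > 0\<close> by simp
  then have "c \<le> P * S^2 / M"
    by simp
  with \<open>P \<ge> 0\<close> show ?thesis
    unfolding feasible_def S_def G_def M_def c_def by auto
qed

theorem lemma9:
  fixes N :: nat and h g :: "nat \<Rightarrow> real" and W \<sigma> L D T fB :: real
  assumes "N > 0" and "\<forall>n\<in>{1..N}. h n > 0" and "\<forall>n\<in>{1..N}. g n > 0"
    and "W > 0" and "\<sigma> > 0" and "L > 0" and "D > 0" and "T > 0" and "fB > 0"
  shows "\<forall>d1 d2. d1 \<in> {0..D} \<and> d2 \<in> {0..D} \<and> L * d1 < fB * T \<and> L * d2 < fB * T \<and> d1 \<le> d2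
           \<longrightarrow> Xopt N h g W \<sigma> L T fB d1 \<le> Xopt N h g W \<sigma> L T fB d2"
proof (intro allI impI)
  fix d1 d2
  define achievable where
    "achievable d = {objective N h W \<sigma> P \<beta> | P \<beta>. feasible N h g W \<sigma> L T fB d P \<beta>}" for d
  assume "d1 \<in> {0..D} \<and> d2 \<in> {0..D} \<and> L * d1 < fB * T \<and> L * d2 < fB * T \<and> d1 \<le> d2"
  then have "exp (2 * d1 / (W * (T - L * d1 / fB))) \<le> exp (2 * d2 / (W * (T - L * d2 / fB)))"
    using assms rate_exponent_mono[of W L fB d2 d1 T] by simp
  then have "achievable d2 \<subseteq> achievable d1"
    unfolding achievable_def using feasible_antimono by blast
  moreover have "bdd_below (achievable d1)"
    unfolding achievable_def using assms(2,4) by (intro objective_bdd_below) (auto intro: less_imp_le)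
  moreover have "achievable d2 \<noteq> {}"
    unfolding achievable_def using feasible_unit_beams_exists[OF assms(1-5), of L T fB d2] by auto
  ultimately show "Xopt N h g W \<sigma> L T fB d1 \<le> Xopt N h g W \<sigma> L T fB d2"
    unfolding Xopt_def achievable_def[symmetric] by (intro cInf_superset_mono)
qed

end
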